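(* Let $q$ be a prime power, $m\ge 1$, and let $L=\{\alpha_1,\dots,\alpha_n\}\subseteq GF(q^m)\setminus\{0\}$. Then the $q$-ary Goppa code $\Gamma(L,G)$ with $G(x)=x^{q}$ is equivalent to the $q$-ary Goppa code $\Gamma(L,G^{*})$ with $G^{*}(x)=x^{q-1}$.
   Context: For a set $L=\{\alpha_1,\dots,\alpha_n\}$ of distinct elements of $GF(q^m)$ and a polynomial $G\in GF(q^m)[x]$ with $G(\alpha_k)\neq 0$ for all $k$, the $q$-ary Goppa code is $\Gamma(L,G)=\{c\in GF(q)^n:\ \sum_{k=1}^n \frac{c_k}{x-\alpha_k}\equiv 0 \pmod{G(x)}\}$; equivalently, $c\in GF(q)^n$ lies in $\Gamma(L,G)$ iff $\sum_k c_k\,\alpha_k^s/G(\alpha_k)=0$ for $s=0,1,\dots,\deg G-1$. Two codes of length $n$ are equivalent if one is obtained from the other by a permutation of coordinates. *)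

theory Defs
  imports "HOL-Computational_Algebra.Polynomial" "HOL-Computational_Algebra.Primes" "HOL-Combinatorics.Permutations"
begin

definition is_subfield :: "'a::field set \<Rightarrow> bool" where
  "is_subfield K \<longleftrightarrow> 0 \<in> K \<and> 1 \<in> K \<and>
     (\<forall>x\<in>K. \<forall>y\<in>K. x + y \<in> K \<and> x * y \<in> K) \<and>
     (\<forall>x\<in>K. - x \<in> K) \<and> (\<forall>x\<in>K. x \<noteq> 0 \<longrightarrow> inverse x \<in> K)"

definition prime_power :: "nat \<Rightarrow> bool" where
  "prime_power q \<longleftrightarrow> (\<exists>p k. prime p \<and> k \<ge> 1 \<and> q = p ^ k)"

definition goppa_code :: "'a::field set \<Rightarrow> 'a list \<Rightarrow> 'a poly \<Rightarrow> 'a list set" where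
  "goppa_code K L G = {c. length c = length L \<and> set c \<subseteq> K \<and>
     (\<forall>s < degree G. (\<Sum>k < length L. c ! k * (L ! k) ^ s / poly G (L ! k)) = 0)}"

definition codes_equivalent :: "nat \<Rightarrow> 'a list set \<Rightarrow> 'a list set \<Rightarrow> bool" where
  "codes_equivalent n C1 C2 \<longleftrightarrow> (\<exists>\<sigma>::nat \<Rightarrow> nat. \<sigma> permutes {..<n} \<and>
     C2 = (\<lambda>c. map (\<lambda>i. c ! \<sigma> i) [0..<n]) ` C1)"

end

theory Submission
  imports Defs
begin

text \<open>The two codes are in fact equal. Writing the parity checks of \<open>\<Gamma>(L, x\<^sup>d)\<close> as
  \<open>\<Sum>\<^sub>k c\<^sub>k / \<alpha>\<^sub>k\<^sup>j = 0\<close> for \<open>j = 1, \<dots>, d\<close>, the code for \<open>x\<^sup>q\<close> has just one check more than the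
  code for \<open>x\<^sup>q\<^sup>-\<^sup>1\<close>, namely \<open>j = q\<close>. Since the \<open>c\<^sub>k\<close> lie in \<open>GF(q)\<close> they are fixed by the
  Frobenius map \<open>y \<mapsto> y\<^sup>q\<close>, which is additive; hence that check is the \<open>q\<close>-th power of the
  check for \<open>j = 1\<close> and is redundant.\<close>

lemma subfield_power_card_eq_same:
  fixes K :: "'a::{field,finite} set"
  assumes K: "is_subfield K" and x: "x \<in> K"
  shows "x ^ card K = x"
proof (cases "x = 0")
  case True
  have "{0, 1} \<subseteq> K" using K unfolding is_subfield_def by auto
  hence "card K \<ge> 2" using card_mono[of K "{0::'a, 1}"] by simp
  with True show ?thesis by simp
next
  case False
  have mult_closed: "x * y \<in> K" "inverse x * y \<in> K" if "y \<in> K" for y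
    using K x False that unfolding is_subfield_def by auto
  have "(\<Prod>y\<in>K-{0}. x * y) = (\<Prod>y\<in>K-{0}. y)"
    by (rule prod.reindex_bij_witness[of _ "\<lambda>y. inverse x * y" "\<lambda>y. x * y"])
       (use False mult_closed in auto)
  hence "x ^ card (K - {0}) = 1" by (simp add: prod.distrib)
  moreover have "card K = Suc (card (K - {0}))"
    using K card.remove[of K 0] unfolding is_subfield_def by simp
  ultimately show ?thesis by simp
qed

text \<open>Adding \<open>1\<close> permutes the field, so \<open>card UNIV \<cdot> 1\<close> is the difference of two equal sums.\<close>
lemma of_nat_card_UNIV_eq_0: "of_nat (card (UNIV :: 'a::{ring_1,finite} set)) = (0::'a)"
proof -
  have "(\<Sum>y\<in>(UNIV::'a set). y + 1) = (\<Sum>y\<in>UNIV. y)"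
    by (rule sum.reindex_bij_witness[of _ "\<lambda>y. y - 1" "\<lambda>y. y + 1"]) auto
  thus ?thesis by (simp add: sum.distrib)
qed

lemma CHAR_eq_prime_of_card_eq_power:
  assumes "prime p" and "card (UNIV :: 'a::{field,finite} set) = p ^ e"
  shows "CHAR('a) = p"
proof -
  have "prime CHAR('a)"
    by (rule prime_CHAR_semidom[OF finite_imp_CHAR_pos[OF finite_UNIV]])
  moreover have "CHAR('a) dvd p ^ e"
    using of_nat_card_UNIV_eq_0 of_nat_eq_0_iff_char_dvd assms(2) by metis
  ultimately show ?thesis using assms(1) prime_dvd_power primes_dvd_imp_eq by metis
qed

lemma goppa_code_monom:
  assumes "0 \<notin> set L"
  shows "goppa_code K L (monom 1 d) = {c. length c = length L \<and> set c \<subseteq> K \<and>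
           (\<forall>j\<in>{1..d}. (\<Sum>k < length L. c ! k / (L ! k) ^ j) = 0)}"
proof -
  have check: "(\<Sum>k < length L. c ! k * (L ! k) ^ s / poly (monom 1 d) (L ! k))
             = (\<Sum>k < length L. c ! k / (L ! k) ^ (d - s))" if "s \<le> d" for c s
  proof (rule sum.cong)
    fix k assume "k \<in> {..<length L}"
    hence "L ! k \<noteq> 0" using assms by (metis lessThan_iff nth_mem)
    thus "c ! k * (L ! k) ^ s / poly (monom 1 d) (L ! k) = c ! k / (L ! k) ^ (d - s)"
      using \<open>s \<le> d\<close> by (simp add: poly_monom power_diff)
  qed simp
  have shift: "(\<forall>j\<in>{1..d}. P j) \<longleftrightarrow> (\<forall>s < d. P (d - s))" for P :: "nat \<Rightarrow> bool"
  proof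
    assume "\<forall>s < d. P (d - s)"
    moreover have "d - (d - j) = j \<and> d - j < d" if "j \<in> {1..d}" for j
      using that by auto
    ultimately show "\<forall>j\<in>{1..d}. P j" by metis
  qed auto
  show ?thesis
    unfolding goppa_code_def
    by (intro Collect_cong conj_cong refl, subst shift) (simp add: degree_monom_eq check)
qed

lemma codes_equivalent_refl:
  assumes "\<forall>c\<in>C. length c = n"
  shows "codes_equivalent n C C"
proof -
  have "map (\<lambda>i. c ! i) [0..<n] = c" if "c \<in> C" for c
    using assms that map_nth by metis
  hence "(\<lambda>c. map (\<lambda>i. c ! i) [0..<n]) ` C = C" by simp
  thus ?thesis unfolding codes_equivalent_def by (intro exI[of _ id]) auto
qed

lemma goppa_code_monom_frobenius_eq:
  fixes K :: "'a::field set"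
  assumes L: "0 \<notin> set L"
    and char: "prime CHAR('a)" and q: "q = CHAR('a) ^ e" "e \<ge> 1"
    and K: "\<And>x. x \<in> K \<Longrightarrow> x ^ q = x"
  shows "goppa_code K L (monom 1 q) = goppa_code K L (monom 1 (q - 1))"
proof (intro set_eqI iffI)
  fix c
  assume "c \<in> goppa_code K L (monom 1 (q - 1))"
  hence c: "length c = length L" "set c \<subseteq> K"
    and checks: "\<And>j. j \<in> {1..q - 1} \<Longrightarrow> (\<Sum>k<length L. c ! k / (L ! k) ^ j) = 0"
    using goppa_code_monom[OF L] by auto
  have "q \<ge> 2"
    using q prime_ge_2_nat[OF char] self_le_power[of "CHAR('a)" e] by simp
  have "(\<Sum>k<length L. c ! k / (L ! k) ^ q) = (\<Sum>k<length L. (c ! k / L ! k) ^ q)"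
  proof (rule sum.cong)
    fix k assume "k \<in> {..<length L}"
    hence "c ! k ^ q = c ! k" using c K by (metis lessThan_iff nth_mem subsetD)
    thus "c ! k / L ! k ^ q = (c ! k / L ! k) ^ q" by (simp add: power_divide)
  qed simp
  also have "\<dots> = (\<Sum>k<length L. c ! k / L ! k) ^ q"
    by (rule freshmans_dream_sum'[OF char q(1), symmetric])
  also have "\<dots> = 0" using checks[of 1] \<open>q \<ge> 2\<close> by simp
  finally have "(\<Sum>k<length L. c ! k / (L ! k) ^ q) = 0" .
  moreover have "j \<in> {1..q - 1}" if "j \<in> {1..q}" "j \<noteq> q" for j
    using that by auto
  ultimately have "\<forall>j\<in>{1..q}. (\<Sum>k<length L. c ! k / (L ! k) ^ j) = 0"
    using checks by metis
  thus "c \<in> goppa_code K L (monom 1 q)"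
    using c goppa_code_monom[OF L] by simp
qed (auto simp: goppa_code_monom[OF L])

theorem lemma1:
  fixes K :: "'a::{field,finite} set" and L :: "'a list" and q m :: nat
  assumes "prime_power q" and "m \<ge> 1"
    and "card (UNIV :: 'a set) = q ^ m"
    and "is_subfield K" and "card K = q"
    and "distinct L" and "0 \<notin> set L"
  shows "codes_equivalent (length L) (goppa_code K L (monom 1 q))
                                     (goppa_code K L (monom 1 (q - 1)))"
proof -
  obtain p k where p: "prime p" "k \<ge> 1" "q = p ^ k"
    using assms(1) unfolding prime_power_def by blast
  have "CHAR('a) = p"
    using CHAR_eq_prime_of_card_eq_power[OF p(1)] assms(3) p(3) by (metis power_mult)
  moreover have "x ^ q = x" if "x \<in> K" for x
    using subfield_power_card_eq_same[OF assms(4) that] assms(5) by simp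
  ultimately have "goppa_code K L (monom 1 q) = goppa_code K L (monom 1 (q - 1))"
    using goppa_code_monom_frobenius_eq[OF assms(7)] p by blast
  thus ?thesis
    by (simp add: codes_equivalent_refl goppa_code_def)
qed

end
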